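(* Let $n\ge1$ and let $\Gamma$ be a finite undirected graph on exactly $n$ vertices, without loops but possibly with multiple edges, together with an edge colouring $c:E(\Gamma)\to\{\text{magenta},\text{yellow},\text{cyan}\}$ that is injective on the set of edges joining any given pair of distinct vertices. Then $\Sigma(\Gamma)\le n$, with equality if and only if every cycle of $\Gamma$ is monochromatic (different cycles may have different colours).
   Context: Let $\Gamma_{my}$ (resp. $\Gamma_{yc}$, $\Gamma_{mc}$) be the spanning subgraph of $\Gamma$ with all vertices of $\Gamma$ and only the magenta and yellow (resp. yellow and cyan, magenta and cyan) edges. For a connected component $C$ of $\Gamma$ and colours $\in\{my,yc,mc\}$, let $\operatorname{val}_{colors}(C)$ be the number of connected components of $C\cap\Gamma_{colors}$. Define \[\Sigma(\Gamma)=\sum_{C}\big(\operatorname{val}_{my}(C)+\operatorname{val}_{yc}(C)+\operatorname{val}_{mc}(C)-2\big),\] the sum over all connected components $C$ of $\Gamma$. A cycle is a closed path $x_0e_0x_1e_1\dots x_ke_kx_0$ with pairwise distinct vertices $x_i$ and edges $e_i$ joining consecutive vertices; it is monochromatic if all its edges have the same colour. *)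

theory Defs
  imports Main
begin

datatype colour = Magenta | Yellow | Cyan

definition coloured_multigraph ::
  "'a set \<Rightarrow> 'e set \<Rightarrow> ('e \<Rightarrow> 'a set) \<Rightarrow> ('e \<Rightarrow> colour) \<Rightarrow> bool" where
  "coloured_multigraph V E ends col \<longleftrightarrow>
     finite V \<and> finite E \<and>
     (\<forall>e\<in>E. ends e \<subseteq> V \<and> card (ends e) = 2) \<and>
     (\<forall>e\<in>E. \<forall>e'\<in>E. ends e = ends e' \<and> col e = col e' \<longrightarrow> e = e')"

definition adj_rel :: "'a set \<Rightarrow> 'e set \<Rightarrow> ('e \<Rightarrow> 'a set) \<Rightarrow> ('a \<times> 'a) set" where
  "adj_rel W F ends = {(x, y). x \<in> W \<and> y \<in> W \<and> (\<exists>e\<in>F. ends e = {x, y})}"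

definition components :: "'a set \<Rightarrow> 'e set \<Rightarrow> ('e \<Rightarrow> 'a set) \<Rightarrow> 'a set set" where
  "components W F ends = {{y \<in> W. (x, y) \<in> (adj_rel W F ends)\<^sup>*} | x. x \<in> W}"

definition val :: "'e set \<Rightarrow> ('e \<Rightarrow> 'a set) \<Rightarrow> ('e \<Rightarrow> colour) \<Rightarrow> colour set \<Rightarrow> 'a set \<Rightarrow> nat" where
  "val E ends col S C = card (components C {e \<in> E. col e \<in> S \<and> ends e \<subseteq> C} ends)"

definition Sigma_graph :: "'a set \<Rightarrow> 'e set \<Rightarrow> ('e \<Rightarrow> 'a set) \<Rightarrow> ('e \<Rightarrow> colour) \<Rightarrow> int" where
  "Sigma_graph V E ends col =
     (\<Sum>C\<in>components V E ends.
        int (val E ends col {Magenta, Yellow} C) + int (val E ends col {Yellow, Cyan} C)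
        + int (val E ends col {Magenta, Cyan} C) - 2)"

definition is_cycle :: "'a set \<Rightarrow> 'e set \<Rightarrow> ('e \<Rightarrow> 'a set) \<Rightarrow> 'a list \<Rightarrow> 'e list \<Rightarrow> bool" where
  "is_cycle V E ends xs es \<longleftrightarrow>
     length xs = length es \<and> xs \<noteq> [] \<and> distinct xs \<and> distinct es \<and>
     set xs \<subseteq> V \<and> set es \<subseteq> E \<and>
     (\<forall>i < length es. ends (es ! i) = {xs ! i, xs ! ((i + 1) mod length xs)})"

definition monochromatic :: "('e \<Rightarrow> colour) \<Rightarrow> 'e list \<Rightarrow> bool" where
  "monochromatic col es \<longleftrightarrow> (\<forall>e\<in>set es. \<forall>e'\<in>set es. col e = col e')"

end

theory Submission
  imports Defs
begin

(* Write k(F) for the number of connected components of the spanning subgraph with edge set F.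
  The components of Gamma_S inside a component C of Gamma are exactly the components of
  Gamma_S contained in C, so Sigma = k(E_my) + k(E_yc) + k(E_mc) - 2 k(E), which equals n
  for the edgeless graph.  Adding an edge uv of colour c never increases this quantity: if u
  and v were disconnected, k drops by one and so do the counts of the two colour pairs
  containing c; otherwise exactly the counts of those colour pairs containing c in which u and
  v were still disconnected drop.  Hence Sigma <= n.  An edge causes a strict drop precisely
  when it closes a cycle whose other edges do not all share its colour, which gives the
  characterisation of equality. *)

definition component_of :: "'a set \<Rightarrow> 'e set \<Rightarrow> ('e \<Rightarrow> 'a set) \<Rightarrow> 'a \<Rightarrow> 'a set" where
  "component_of W F ends x = {y \<in> W. (x, y) \<in> (adj_rel W F ends)\<^sup>*}"

lemma components_eq_image: "components W F ends = component_of W F ends ` W"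
  unfolding components_def component_of_def by blast

lemma finite_components: "finite W \<Longrightarrow> finite (components W F ends)"
  by (simp add: components_eq_image)

lemma adj_rel_mono: "W \<subseteq> W' \<Longrightarrow> F \<subseteq> F' \<Longrightarrow> adj_rel W F ends \<subseteq> adj_rel W' F' ends"
  unfolding adj_rel_def by blast

lemma connected_mono:
  "W \<subseteq> W' \<Longrightarrow> F \<subseteq> F' \<Longrightarrow> (x, y) \<in> (adj_rel W F ends)\<^sup>* \<Longrightarrow> (x, y) \<in> (adj_rel W' F' ends)\<^sup>*"
  using rtrancl_mono[OF adj_rel_mono] by blast

lemma connected_sym:
  assumes "(x, y) \<in> (adj_rel W F ends)\<^sup>*"
  shows "(y, x) \<in> (adj_rel W F ends)\<^sup>*"
proof -
  have "sym (adj_rel W F ends)"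
    unfolding adj_rel_def sym_def by (auto simp: insert_commute)
  then show ?thesis
    using assms by (metis sym_rtrancl symD)
qed

lemma component_of_mono:
  "W \<subseteq> W' \<Longrightarrow> F \<subseteq> F' \<Longrightarrow> component_of W F ends x \<subseteq> component_of W' F' ends x"
  unfolding component_of_def using connected_mono[of W W' F F'] by blast

lemma component_of_self: "x \<in> W \<Longrightarrow> x \<in> component_of W F ends x"
  unfolding component_of_def by simp

lemma component_of_subset: "component_of W F ends x \<subseteq> W"
  unfolding component_of_def by blast

lemma component_of_eq:
  assumes "y \<in> component_of W F ends x"
  shows "component_of W F ends y = component_of W F ends x"
proof -
  have xy: "(x, y) \<in> (adj_rel W F ends)\<^sup>*"
    using assms unfolding component_of_def by blast
  with connected_sym[OF xy] show ?thesis
    unfolding component_of_def by (blast intro: rtrancl_trans)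
qed

lemma component_of_closed: "adj_rel W F ends `` component_of W F ends x \<subseteq> component_of W F ends x"
  unfolding component_of_def adj_rel_def by (auto intro: rtrancl_into_rtrancl[of x])

lemma component_of_least:
  assumes "x \<in> T" "adj_rel W F ends `` T \<subseteq> T"
  shows "component_of W F ends x \<subseteq> T"
proof -
  have "component_of W F ends x \<subseteq> (adj_rel W F ends)\<^sup>* `` T"
    unfolding component_of_def using assms(1) by blast
  then show ?thesis
    using Image_closed_trancl[OF assms(2)] by simp
qed

lemma components_eqI:
  assumes "C \<in> components W F ends" "C' \<in> components W F ends" "x \<in> C" "x \<in> C'"
  shows "C = C'"
proof -
  obtain a b where "C = component_of W F ends a" "C' = component_of W F ends b"
    using assms(1,2) unfolding components_eq_image by blast
  then show ?thesis
    using assms(3,4) component_of_eq[of x W F ends a] component_of_eq[of x W F ends b] by simp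
qed

lemma card_components_no_edges: "card (components W {} ends) = card W"
proof -
  have "component_of W {} ends x = W \<inter> {x}" for x
    unfolding component_of_def adj_rel_def by auto
  then have "components W {} ends = (\<lambda>x. {x}) ` W"
    unfolding components_eq_image by auto
  then show ?thesis
    by (simp add: card_image)
qed

lemma adj_rel_insert_edge:
  assumes "ends e = {u, v}" "u \<in> W" "v \<in> W"
  shows "adj_rel W (insert e F) ends = adj_rel W F ends \<union> {(u, v), (v, u)}"
  using assms unfolding adj_rel_def by (auto simp: doubleton_eq_iff)

lemma component_of_insert_edge:
  fixes F :: "'e set"
  assumes e: "ends e = {u, v}" "u \<in> W" "v \<in> W" and x: "x \<in> W"
  defines "A \<equiv> component_of W F ends u \<union> component_of W F ends v"
  shows "component_of W (insert e F) ends x = (if x \<in> A then A else component_of W F ends x)"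
proof -
  let ?c = "component_of W F ends" and ?c' = "component_of W (insert e F) ends"
  have adj': "adj_rel W (insert e F) ends = adj_rel W F ends \<union> {(u, v), (v, u)}"
    using adj_rel_insert_edge[of ends e u v] e by blast
  have grow: "?c y \<subseteq> ?c' y" for y
    by (rule component_of_mono) auto
  have "v \<in> ?c' u"
    using e unfolding component_of_def adj' by auto
  then have "?c' v = ?c' u"
    by (rule component_of_eq)
  then have A_sub: "A \<subseteq> ?c' u"
    unfolding A_def using grow by blast
  let ?T = "if x \<in> A then A else ?c x"
  show ?thesis
  proof (rule equalityI)
    have "adj_rel W (insert e F) ends `` ?T \<subseteq> ?T"
    proof (cases "x \<in> A")
      case True
      then show ?thesis
        using component_of_closed[of W F ends] component_of_self[OF e(2)] component_of_self[OF e(3)]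
        unfolding adj' A_def by fastforce
    next
      case False
      have "u \<notin> ?c x" "v \<notin> ?c x"
        using False component_of_eq[of _ W F ends x] component_of_self[OF x] unfolding A_def by blast+
      then show ?thesis
        using False component_of_closed[of W F ends x] unfolding adj' by auto
    qed
    moreover have "x \<in> ?T"
      by (simp add: component_of_self[OF x])
    ultimately show "?c' x \<subseteq> ?T"
      by (rule component_of_least[rotated])
  next
    show "?T \<subseteq> ?c' x"
    proof (cases "x \<in> A")
      case True
      then have "x \<in> ?c' u"
        using A_sub by blast
      then have "?c' x = ?c' u"
        by (rule component_of_eq)
      then show ?thesis
        using True A_sub by simp
    next
      case False
      then show ?thesis
        using grow[of x] by simp
    qed
  qed
qed

lemma card_components_insert_edge:
  fixes F :: "'e set"
  assumes W: "finite W" and e: "ends e = {u, v}" "u \<in> W" "v \<in> W"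
  shows "card (components W F ends) =
    card (components W (insert e F) ends) + (if (u, v) \<in> (adj_rel W F ends)\<^sup>* then 0 else 1)"
proof -
  let ?c = "component_of W F ends"
  define A where "A = ?c u \<union> ?c v"
  define X where "X = ?c ` (W - A)"
  have u: "u \<in> ?c u"
    by (rule component_of_self[OF e(2)])
  have v: "v \<in> ?c v"
    by (rule component_of_self[OF e(3)])
  have in_A: "?c x = ?c u \<or> ?c x = ?c v" if "x \<in> A" for x
    using that component_of_eq[of x W F ends u] component_of_eq[of x W F ends v] unfolding A_def by blast
  have not_in_X: "D \<notin> X" if "D \<subseteq> A" for D
  proof
    assume "D \<in> X"
    then obtain y where "y \<in> W - A" "D = ?c y"
      unfolding X_def by blast
    then show False
      using that component_of_self[of y W F ends] by blast
  qed
  have old: "components W F ends = insert (?c u) (insert (?c v) X)"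
  proof -
    have "?c ` W = ?c ` (W \<inter> A) \<union> X"
      unfolding X_def by blast
    moreover have "?c ` (W \<inter> A) \<subseteq> {?c u, ?c v}"
      using in_A by auto
    moreover have "?c u \<in> ?c ` (W \<inter> A)" "?c v \<in> ?c ` (W \<inter> A)"
      using u v e(2,3) unfolding A_def by auto
    ultimately show ?thesis
      unfolding components_eq_image by auto
  qed
  have "components W (insert e F) ends = (\<lambda>x. if x \<in> A then A else ?c x) ` W"
    unfolding components_eq_image A_def using component_of_insert_edge[of ends e u v W, OF e] by simp
  also have "\<dots> = insert A X"
    using u e(2) unfolding X_def A_def by auto
  finally have new: "components W (insert e F) ends = insert A X" .
  have "(u, v) \<in> (adj_rel W F ends)\<^sup>* \<longleftrightarrow> v \<in> ?c u"
    unfolding component_of_def using e(3) by simp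
  also have "\<dots> \<longleftrightarrow> ?c u = ?c v"
    using component_of_eq[of v W F ends u] v by metis
  finally have conn: "(u, v) \<in> (adj_rel W F ends)\<^sup>* \<longleftrightarrow> ?c u = ?c v" .
  have "finite X"
    unfolding X_def using W by simp
  moreover have "?c u \<notin> X" "?c v \<notin> X" "A \<notin> X"
    using not_in_X unfolding A_def by auto
  ultimately show ?thesis
    unfolding old new conn by (cases "?c u = ?c v") simp_all
qed

lemma components_induced:
  assumes FG: "F \<subseteq> G" and C: "C \<in> components W G ends"
  shows "components C {e \<in> F. ends e \<subseteq> C} ends = {D \<in> components W F ends. D \<subseteq> C}"
proof -
  let ?F = "{e \<in> F. ends e \<subseteq> C}"
  obtain x0 where "C = component_of W G ends x0"
    using C unfolding components_eq_image by blast
  then have CW: "C \<subseteq> W" and G_closed: "adj_rel W G ends `` C \<subseteq> C"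
    using component_of_subset component_of_closed by simp_all
  have "adj_rel W F ends `` C \<subseteq> adj_rel W G ends `` C"
    using adj_rel_mono[OF order_refl FG] by blast
  with G_closed have C_closed: "adj_rel W F ends `` C \<subseteq> C"
    by (rule order_trans[rotated])
  have same: "component_of C ?F ends x = component_of W F ends x" if x: "x \<in> C" for x
  proof
    show "component_of C ?F ends x \<subseteq> component_of W F ends x"
      using CW by (rule component_of_mono) blast
    have "adj_rel W F ends `` component_of C ?F ends x \<subseteq> component_of C ?F ends x"
    proof
      fix z assume "z \<in> adj_rel W F ends `` component_of C ?F ends x"
      then obtain y where y: "y \<in> component_of C ?F ends x" and yz: "(y, z) \<in> adj_rel W F ends"
        by blast
      have "y \<in> C"
        using y component_of_subset by fast
      with yz C_closed have "z \<in> C"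
        by blast
      with \<open>y \<in> C\<close> yz have "(y, z) \<in> adj_rel C ?F ends"
        unfolding adj_rel_def by auto
      then show "z \<in> component_of C ?F ends x"
        using y component_of_closed[of C ?F ends x] by blast
    qed
    then show "component_of W F ends x \<subseteq> component_of C ?F ends x"
      by (rule component_of_least[OF component_of_self[OF x]])
  qed
  have "components C ?F ends = component_of W F ends ` C"
    unfolding components_eq_image using same by simp
  also have "\<dots> = {D \<in> components W F ends. D \<subseteq> C}"
  proof (intro equalityI subsetI)
    fix D assume "D \<in> component_of W F ends ` C"
    then obtain x where "x \<in> C" "D = component_of W F ends x"
      by blast
    then show "D \<in> {D \<in> components W F ends. D \<subseteq> C}"
      using same[of x] component_of_subset[of C ?F ends x] CW unfolding components_eq_image by auto
  next
    fix D assume "D \<in> {D \<in> components W F ends. D \<subseteq> C}"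
    then obtain x where "x \<in> W" "D = component_of W F ends x" "D \<subseteq> C"
      unfolding components_eq_image by blast
    then show "D \<in> component_of W F ends ` C"
      using component_of_self[of x W F ends] by blast
  qed
  finally show ?thesis .
qed

lemma card_components_refine:
  assumes W: "finite W" and FG: "F \<subseteq> G"
  shows "(\<Sum>C\<in>components W G ends. card {D \<in> components W F ends. D \<subseteq> C}) = card (components W F ends)"
proof -
  let ?parts = "\<lambda>C. {D \<in> components W F ends. D \<subseteq> C}"
  have covered: "components W F ends \<subseteq> (\<Union>C\<in>components W G ends. ?parts C)"
  proof
    fix D assume "D \<in> components W F ends"
    then obtain x where x: "x \<in> W" and D: "D = component_of W F ends x"
      unfolding components_eq_image by blast
    have "D \<subseteq> component_of W G ends x"
      unfolding D using FG by (rule component_of_mono[OF order_refl])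
    moreover have "component_of W G ends x \<in> components W G ends"
      unfolding components_eq_image using x by blast
    ultimately show "D \<in> (\<Union>C\<in>components W G ends. ?parts C)"
      using \<open>D \<in> components W F ends\<close> by blast
  qed
  have cover: "(\<Union>C\<in>components W G ends. ?parts C) = components W F ends"
    by (rule subset_antisym[OF _ covered]) (rule UN_least, blast)
  have nonempty: "\<exists>x. x \<in> D" if D: "D \<in> components W F ends" for D
  proof -
    obtain x where "x \<in> W" "D = component_of W F ends x"
      using D unfolding components_eq_image by blast
    then show ?thesis
      using component_of_self[of x W F ends] by auto
  qed
  have disjoint: "\<forall>C\<in>components W G ends. \<forall>C'\<in>components W G ends. C \<noteq> C' \<longrightarrow> ?parts C \<inter> ?parts C' = {}"
  proof (intro ballI impI)
    fix C C' assume C: "C \<in> components W G ends" and C': "C' \<in> components W G ends" and "C \<noteq> C'"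
    show "?parts C \<inter> ?parts C' = {}"
    proof (rule ccontr)
      assume "?parts C \<inter> ?parts C' \<noteq> {}"
      then obtain D where "D \<in> components W F ends" "D \<subseteq> C" "D \<subseteq> C'"
        by blast
      then obtain x where "x \<in> C" "x \<in> C'"
        using nonempty by blast
      then show False
        using components_eqI[OF C C'] \<open>C \<noteq> C'\<close> by blast
    qed
  qed
  have "card (\<Union>C\<in>components W G ends. ?parts C) = (\<Sum>C\<in>components W G ends. card (?parts C))"
    using W finite_components disjoint by (intro card_UN_disjoint) auto
  then show ?thesis
    unfolding cover by simp
qed

definition is_walk :: "('e \<Rightarrow> 'a set) \<Rightarrow> 'a list \<Rightarrow> 'e list \<Rightarrow> bool" where
  "is_walk ends xs es \<longleftrightarrow>
     length xs = Suc (length es) \<and> (\<forall>i < length es. ends (es ! i) = {xs ! i, xs ! Suc i})"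

lemma hd_last_conv_nth_Suc:
  assumes "length xs = Suc n"
  shows "hd xs = xs ! 0" "last xs = xs ! n"
proof -
  have "xs \<noteq> []"
    using assms by auto
  then show "hd xs = xs ! 0" "last xs = xs ! n"
    using assms by (simp_all add: hd_conv_nth last_conv_nth)
qed

lemma is_walk_take:
  assumes "is_walk ends xs es" "k \<le> length es"
  shows "is_walk ends (take (Suc k) xs) (take k es)"
  using assms unfolding is_walk_def by auto

lemma is_walk_snoc:
  assumes "is_walk ends xs es" "ends e = {last xs, z}"
  shows "is_walk ends (xs @ [z]) (es @ [e])"
proof -
  have "last xs = xs ! length es"
    using assms(1) hd_last_conv_nth_Suc(2) unfolding is_walk_def by blast
  then show ?thesis
    using assms unfolding is_walk_def by (auto simp: nth_append less_Suc_eq)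
qed

lemma is_walk_connected:
  assumes walk: "is_walk ends xs es" and "set xs \<subseteq> W" "set es \<subseteq> F"
  shows "(hd xs, last xs) \<in> (adj_rel W F ends)\<^sup>*"
proof -
  have len: "length xs = Suc (length es)"
    using walk unfolding is_walk_def by simp
  have "(xs ! 0, xs ! i) \<in> (adj_rel W F ends)\<^sup>*" if "i < length xs" for i
    using that
  proof (induction i)
    case 0
    show ?case by simp
  next
    case (Suc i)
    then have "i < length es"
      using len by simp
    then have "es ! i \<in> F" "ends (es ! i) = {xs ! i, xs ! Suc i}" "xs ! i \<in> W" "xs ! Suc i \<in> W"
      using walk assms(2,3) Suc.prems unfolding is_walk_def by auto
    then have "(xs ! i, xs ! Suc i) \<in> adj_rel W F ends"
      unfolding adj_rel_def by blast
    with Suc show ?case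
      by simp
  qed
  then show ?thesis
    using len hd_last_conv_nth_Suc[OF len] by simp
qed

lemma connected_imp_path:
  assumes "(u, v) \<in> (adj_rel W F ends)\<^sup>*" "u \<in> W"
  shows "\<exists>xs es. is_walk ends xs es \<and> distinct xs \<and> hd xs = u \<and> last xs = v \<and>
    set xs \<subseteq> W \<and> set es \<subseteq> F"
  using assms
proof (induction rule: rtrancl_induct)
  case base
  have "is_walk ends [u] []"
    unfolding is_walk_def by simp
  then show ?case
    using base by fastforce
next
  case (step y z)
  then obtain xs es where walk: "is_walk ends xs es" and path: "distinct xs" "hd xs = u" "last xs = y"
    and sets: "set xs \<subseteq> W" "set es \<subseteq> F"
    by blast
  obtain e where e: "e \<in> F" "ends e = {y, z}" "z \<in> W"
    using step.hyps(2) unfolding adj_rel_def by blast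
  have len: "length xs = Suc (length es)"
    using walk unfolding is_walk_def by simp
  show ?case
  proof (cases "z \<in> set xs")
    case True
    then obtain k where k: "k < length xs" "xs ! k = z"
      by (metis in_set_conv_nth)
    let ?xs = "take (Suc k) xs"
    have "is_walk ends ?xs (take k es)"
      using walk k len by (intro is_walk_take) auto
    moreover have "distinct ?xs"
      using path(1) by simp
    moreover have "hd ?xs = u"
      using path(2) by (simp add: hd_take)
    moreover have "last ?xs = z"
      using k by (simp add: take_Suc_conv_app_nth)
    moreover have "set ?xs \<subseteq> W" "set (take k es) \<subseteq> F"
      using sets by (auto dest: in_set_takeD)
    ultimately show ?thesis
      by blast
  next
    case False
    have "xs \<noteq> []"
      using len by auto
    have "is_walk ends (xs @ [z]) (es @ [e])"
      using walk e(2) path(3) by (intro is_walk_snoc) auto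
    moreover have "distinct (xs @ [z])" "hd (xs @ [z]) = u" "last (xs @ [z]) = z"
      using path False \<open>xs \<noteq> []\<close> by auto
    moreover have "set (xs @ [z]) \<subseteq> W" "set (es @ [e]) \<subseteq> F"
      using sets e by auto
    ultimately show ?thesis
      by blast
  qed
qed

lemma is_walk_distinct_edges:
  assumes walk: "is_walk ends xs es" and "distinct xs"
  shows "distinct es"
  unfolding distinct_conv_nth
proof (intro allI impI)
  fix i j assume ij: "i < length es" "j < length es" "i \<noteq> j"
  have len: "length xs = Suc (length es)"
    using walk unfolding is_walk_def by simp
  show "es ! i \<noteq> es ! j"
  proof
    assume "es ! i = es ! j"
    then have "{xs ! i, xs ! Suc i} = {xs ! j, xs ! Suc j}"
      using walk ij unfolding is_walk_def by metis
    then show False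
      using \<open>distinct xs\<close> ij len by (auto simp: doubleton_eq_iff nth_eq_iff_index_eq)
  qed
qed

lemma path_delete_edge_disconnected:
  assumes walk: "is_walk ends xs es" and dist: "distinct xs" and j: "j < length es"
  shows "(hd xs, last xs) \<notin> (adj_rel W (set es - {es ! j}) ends)\<^sup>*"
proof
  let ?R = "adj_rel W (set es - {es ! j}) ends"
  let ?A = "(\<lambda>p. xs ! p) ` {..j}"
  have len: "length xs = Suc (length es)"
    using walk unfolding is_walk_def by simp
  have idx: "xs ! q \<in> ?A \<longleftrightarrow> q \<le> j" if "q < length xs" for q
    using that j len dist by (auto simp: nth_eq_iff_index_eq)
  have "?R `` ?A \<subseteq> ?A"
  proof
    fix z assume "z \<in> ?R `` ?A"
    then obtain y f where y: "y \<in> ?A" and f: "f \<in> set es" "f \<noteq> es ! j" "ends f = {y, z}"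
      unfolding adj_rel_def by blast
    then obtain k where k: "k < length es" "f = es ! k" "k \<noteq> j"
      by (metis in_set_conv_nth)
    then have "{y, z} = {xs ! k, xs ! Suc k}"
      using walk f(3) unfolding is_walk_def by simp
    then consider "y = xs ! k" "z = xs ! Suc k" | "y = xs ! Suc k" "z = xs ! k"
      by (auto simp: doubleton_eq_iff)
    then show "z \<in> ?A"
    proof cases
      case 1
      then have "k < j"
        using y idx[of k] k len by simp
      then show ?thesis
        using 1 idx[of "Suc k"] len by simp
    next
      case 2
      then show ?thesis
        using y idx[of k] idx[of "Suc k"] k len by simp
    qed
  qed
  then have closed: "?R\<^sup>* `` ?A = ?A"
    by (rule Image_closed_trancl)
  assume "(hd xs, last xs) \<in> ?R\<^sup>*"
  moreover have "hd xs \<in> ?A"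
    using hd_last_conv_nth_Suc(1)[OF len] by auto
  ultimately have "last xs \<in> ?A"
    using closed by blast
  then show False
    using hd_last_conv_nth_Suc(2)[OF len] idx[of "length es"] j len by simp
qed

lemma is_cycle_snoc_iff:
  "is_cycle V E ends xs (es @ [e]) \<longleftrightarrow>
     is_walk ends xs es \<and> ends e = {last xs, hd xs} \<and> distinct xs \<and> distinct (es @ [e]) \<and>
     set xs \<subseteq> V \<and> set (es @ [e]) \<subseteq> E"
proof (cases "length xs = Suc (length es)")
  case True
  note hd_last_conv_nth_Suc[OF True]
  moreover have "(i + 1) mod length xs = Suc i" if "i < length es" for i
    using that True by simp
  ultimately show ?thesis
    using True unfolding is_cycle_def is_walk_def
    by (auto simp: All_less_Suc nth_append insert_commute)
next
  case False
  then show ?thesis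
    unfolding is_cycle_def is_walk_def by auto
qed

lemma is_cycle_rotate:
  assumes cycle: "is_cycle V E ends xs es"
  shows "is_cycle V E ends (rotate k xs) (rotate k es)"
proof -
  let ?m = "length xs"
  have len: "length es = ?m" and edge: "\<And>i. i < ?m \<Longrightarrow> ends (es ! i) = {xs ! i, xs ! ((i + 1) mod ?m)}"
    using cycle unfolding is_cycle_def by auto
  have "ends (rotate k es ! i) = {rotate k xs ! i, rotate k xs ! ((i + 1) mod ?m)}" if "i < ?m" for i
  proof -
    have "0 < ?m"
      using that by linarith
    then have "ends (rotate k es ! i) = {xs ! ((k + i) mod ?m), xs ! (((k + i) mod ?m + 1) mod ?m)}"
      using that len edge by (simp add: nth_rotate)
    also have "\<dots> = {rotate k xs ! i, rotate k xs ! ((i + 1) mod ?m)}"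
      using that \<open>0 < ?m\<close> by (simp add: nth_rotate mod_simps)
    finally show ?thesis .
  qed
  then show ?thesis
    using cycle unfolding is_cycle_def by simp
qed

lemma is_cycle_rotate_to_last:
  assumes cycle: "is_cycle V E ends xs es" and f: "f \<in> set es"
  obtains xs' es' where "is_cycle V E ends xs' (es' @ [f])" "set (es' @ [f]) = set es"
proof -
  obtain i where i: "i < length es" "es ! i = f"
    using f by (metis in_set_conv_nth)
  let ?es = "rotate (Suc i) es"
  have ne: "?es \<noteq> []"
    using i by auto
  then have "last ?es = ?es ! (length es - 1)"
    by (metis last_conv_nth length_rotate)
  also have "\<dots> = es ! ((Suc i + (length es - 1)) mod length es)"
    using i by (intro nth_rotate) linarith
  also have "Suc i + (length es - 1) = i + length es"
    using i by simp
  also have "es ! ((i + length es) mod length es) = f"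
    using i by simp
  finally have "?es = butlast ?es @ [f]"
    using append_butlast_last_id[OF ne] by simp
  then show ?thesis
    using that[of "rotate (Suc i) xs" "butlast ?es"] is_cycle_rotate[OF cycle, of "Suc i"] by simp
qed

definition colour_pairs :: "colour set set" where
  "colour_pairs = {{Magenta, Yellow}, {Yellow, Cyan}, {Magenta, Cyan}}"

lemma finite_colour_pairs [simp]: "finite colour_pairs"
  unfolding colour_pairs_def by simp

lemma sum_colour_pairs:
  "(\<Sum>S\<in>colour_pairs. f S) = f {Magenta, Yellow} + f {Yellow, Cyan} + f {Magenta, Cyan}"
  unfolding colour_pairs_def by (simp add: doubleton_eq_iff add.assoc)

definition potential :: "'a set \<Rightarrow> 'e set \<Rightarrow> ('e \<Rightarrow> 'a set) \<Rightarrow> ('e \<Rightarrow> colour) \<Rightarrow> int" where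
  "potential V F ends col =
     (\<Sum>S\<in>colour_pairs. int (card (components V {e \<in> F. col e \<in> S} ends)))
     - 2 * int (card (components V F ends))"

lemma Sigma_graph_eq_potential:
  assumes V: "finite V"
  shows "Sigma_graph V E ends col = potential V E ends col"
proof -
  have val: "(\<Sum>C\<in>components V E ends. int (val E ends col S C)) =
    int (card (components V {e \<in> E. col e \<in> S} ends))" for S
  proof -
    let ?ES = "{e \<in> E. col e \<in> S}"
    have "val E ends col S C = card {D \<in> components V ?ES ends. D \<subseteq> C}"
      if "C \<in> components V E ends" for C
    proof -
      have "{e \<in> E. col e \<in> S \<and> ends e \<subseteq> C} = {e \<in> ?ES. ends e \<subseteq> C}"
        by blast
      then show ?thesis
        unfolding val_def using components_induced[OF _ that, of ?ES] by simp
    qed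
    then have "(\<Sum>C\<in>components V E ends. val E ends col S C) =
      (\<Sum>C\<in>components V E ends. card {D \<in> components V ?ES ends. D \<subseteq> C})"
      by simp
    also have "\<dots> = card (components V ?ES ends)"
      using V by (rule card_components_refine) blast
    finally show ?thesis
      by (metis of_nat_sum)
  qed
  show ?thesis
    unfolding Sigma_graph_def potential_def sum_colour_pairs
    by (simp add: sum.distrib sum_subtractf val)
qed

lemma int_card_filter_eq_sum:
  "finite A \<Longrightarrow> int (card {x \<in> A. P x}) = (\<Sum>x\<in>A. if P x then 1 else 0)"
  by (simp add: sum.If_cases Int_def conj_commute)

lemma potential_insert_edge:
  assumes V: "finite V" and e: "ends e = {u, v}" "u \<in> V" "v \<in> V"
  shows "potential V (insert e F) ends col = potential V F ends col -
    (if (u, v) \<in> (adj_rel V F ends)\<^sup>*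
     then int (card {S \<in> colour_pairs. col e \<in> S \<and> (u, v) \<notin> (adj_rel V {f \<in> F. col f \<in> S} ends)\<^sup>*})
     else 0)"
proof -
  let ?conn = "\<lambda>F. (u, v) \<in> (adj_rel V F ends)\<^sup>*"
  let ?k = "\<lambda>F. int (card (components V F ends))"
  let ?lost = "\<lambda>S. if col e \<in> S \<and> \<not> ?conn {f \<in> F. col f \<in> S} then 1 else 0 :: int"
  have k: "?k (insert e F') = ?k F' - (if ?conn F' then 0 else 1)" for F'
    using card_components_insert_edge[of V ends e u v F', OF V e] by simp
  have kS: "?k {f \<in> insert e F. col f \<in> S} = ?k {f \<in> F. col f \<in> S} - ?lost S" for S
  proof (cases "col e \<in> S")
    case True
    then have "{f \<in> insert e F. col f \<in> S} = insert e {f \<in> F. col f \<in> S}"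
      by blast
    then show ?thesis
      using True k by simp
  next
    case False
    then have "{f \<in> insert e F. col f \<in> S} = {f \<in> F. col f \<in> S}"
      by blast
    then show ?thesis
      using False by simp
  qed
  have "potential V (insert e F) ends col =
    potential V F ends col - (\<Sum>S\<in>colour_pairs. ?lost S) + 2 * (if ?conn F then 0 else 1)"
    unfolding potential_def kS k by (simp add: sum_subtractf)
  moreover have "(\<Sum>S\<in>colour_pairs. ?lost S) = 2" if "\<not> ?conn F"
  proof -
    have "\<not> ?conn {f \<in> F. col f \<in> S}" for S
      using that connected_mono[of V V "{f \<in> F. col f \<in> S}" F] by blast
    then show ?thesis
      by (cases "col e") (simp_all add: sum_colour_pairs)
  qed
  moreover have "(\<Sum>S\<in>colour_pairs. ?lost S) =
    int (card {S \<in> colour_pairs. col e \<in> S \<and> \<not> ?conn {f \<in> F. col f \<in> S}})"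
    by (rule int_card_filter_eq_sum[symmetric]) (simp add: colour_pairs_def)
  ultimately show ?thesis
    by auto
qed

lemma potential_no_edges: "potential V {} ends col = int (card V)"
  unfolding potential_def sum_colour_pairs by (simp add: card_components_no_edges)

lemma coloured_multigraph_edge:
  assumes "coloured_multigraph V E ends col" "e \<in> E"
  obtains u v where "ends e = {u, v}" "u \<in> V" "v \<in> V"
proof -
  have "ends e \<subseteq> V" "card (ends e) = 2"
    using assms unfolding coloured_multigraph_def by auto
  then show ?thesis
    using that by (auto simp: card_2_iff)
qed

lemma potential_antimono:
  assumes G: "coloured_multigraph V E ends col" and "D \<subseteq> E"
  shows "potential V (F \<union> D) ends col \<le> potential V F ends col"
proof -
  have V: "finite V" and "finite D"
    using G \<open>D \<subseteq> E\<close> finite_subset unfolding coloured_multigraph_def by blast+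
  from \<open>finite D\<close> \<open>D \<subseteq> E\<close> show ?thesis
  proof (induction D rule: finite_subset_induct)
    case (insert e D)
    obtain u v where e: "ends e = {u, v}" "u \<in> V" "v \<in> V"
      using coloured_multigraph_edge[OF G insert.hyps(2)] .
    have "potential V (insert e (F \<union> D)) ends col \<le> potential V (F \<union> D) ends col"
      using potential_insert_edge[of V ends e u v "F \<union> D" col, OF V e] by simp
    then show ?case
      using insert.IH by simp
  qed simp
qed

lemma potential_le_card:
  assumes "coloured_multigraph V E ends col" "F \<subseteq> E"
  shows "potential V F ends col \<le> int (card V)"
  using potential_antimono[OF assms, of "{}"] by (simp add: potential_no_edges)

lemma potential_eq_card_if_cycles_monochromatic:
  assumes G: "coloured_multigraph V E ends col"
    and mono: "\<forall>xs es. is_cycle V E ends xs es \<longrightarrow> monochromatic col es"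
    and "F \<subseteq> E"
  shows "potential V F ends col = int (card V)"
proof -
  have V: "finite V" and "finite F"
    using G \<open>F \<subseteq> E\<close> finite_subset unfolding coloured_multigraph_def by blast+
  from \<open>finite F\<close> \<open>F \<subseteq> E\<close> show ?thesis
  proof (induction F rule: finite_subset_induct')
    case empty
    show ?case
      by (rule potential_no_edges)
  next
    case (insert a F)
    obtain u v where a: "ends a = {u, v}" "u \<in> V" "v \<in> V"
      using coloured_multigraph_edge[OF G insert.hyps(2)] .
    have "(u, v) \<in> (adj_rel V {f \<in> F. col f \<in> S} ends)\<^sup>*"
      if conn: "(u, v) \<in> (adj_rel V F ends)\<^sup>*" and S: "col a \<in> S" for S
    proof -
      obtain xs es where walk: "is_walk ends xs es" and path: "distinct xs" "hd xs = u" "last xs = v"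
        and sets: "set xs \<subseteq> V" "set es \<subseteq> F"
        using connected_imp_path[OF conn a(2)] by blast
      have "distinct (es @ [a])"
        using is_walk_distinct_edges[OF walk path(1)] sets(2) insert.hyps(4) by auto
      then have "is_cycle V E ends xs (es @ [a])"
        unfolding is_cycle_snoc_iff using walk path sets a(1) insert.hyps(2,3)
        by (auto simp: insert_commute)
      then have "\<forall>f\<in>set es. col f = col a"
        using mono unfolding monochromatic_def by simp
      then have "set es \<subseteq> {f \<in> F. col f \<in> S}"
        using sets(2) S by auto
      then show ?thesis
        using is_walk_connected[OF walk sets(1)] path(2,3) by simp
    qed
    then show ?case
      using potential_insert_edge[of V ends a u v F col, OF V a] insert.IH by (simp add: card_eq_0_iff)
  qed
qed

lemma cycles_monochromatic_if_potential_eq_card: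
  assumes G: "coloured_multigraph V E ends col"
    and eq: "potential V E ends col = int (card V)"
    and cycle: "is_cycle V E ends xs es"
  shows "monochromatic col es"
proof (rule ccontr)
  assume "\<not> monochromatic col es"
  then obtain f g where fg: "f \<in> set es" "g \<in> set es" "col f \<noteq> col g"
    unfolding monochromatic_def by blast
  obtain xs' es' where cycle': "is_cycle V E ends xs' (es' @ [f])" and set_es: "set (es' @ [f]) = set es"
    using is_cycle_rotate_to_last[OF cycle fg(1)] .
  then have walk: "is_walk ends xs' es'" and f: "ends f = {hd xs', last xs'}" and dist: "distinct xs'"
    and xs'_V: "set xs' \<subseteq> V" and es'_E: "set es' \<subseteq> E"
    unfolding is_cycle_snoc_iff by (auto simp: insert_commute)
  have "xs' \<noteq> []"
    using walk unfolding is_walk_def by auto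
  then have V: "finite V" "hd xs' \<in> V" "last xs' \<in> V"
    using G xs'_V hd_in_set last_in_set unfolding coloured_multigraph_def by auto
  have "g \<in> set es'"
    using fg set_es by auto
  then obtain j where j: "j < length es'" "es' ! j = g"
    by (metis in_set_conv_nth)
  obtain S where S: "S \<in> colour_pairs" "col f \<in> S" "col g \<notin> S"
    using fg(3) unfolding colour_pairs_def by (cases "col f"; cases "col g") auto
  have "{e \<in> set es'. col e \<in> S} \<subseteq> set es' - {es' ! j}"
    using S(3) j(2) by auto
  then have "(hd xs', last xs') \<notin> (adj_rel V {e \<in> set es'. col e \<in> S} ends)\<^sup>*"
    using path_delete_edge_disconnected[OF walk dist j(1), of V] connected_mono[of V V] by blast
  then have "card {S \<in> colour_pairs. col f \<in> S \<and>
      (hd xs', last xs') \<notin> (adj_rel V {e \<in> set es'. col e \<in> S} ends)\<^sup>*} > 0"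
    using S by (auto simp: card_gt_0_iff)
  moreover have "(hd xs', last xs') \<in> (adj_rel V (set es') ends)\<^sup>*"
    using is_walk_connected[OF walk xs'_V] by simp
  ultimately have "potential V (set es) ends col < potential V (set es') ends col"
    using potential_insert_edge[of V ends f "hd xs'" "last xs'" "set es'" col, OF V(1) f V(2,3)] set_es
    by simp
  moreover have "potential V (set es') ends col \<le> int (card V)"
    using potential_le_card[OF G es'_E] .
  moreover have "potential V E ends col \<le> potential V (set es) ends col"
    using potential_antimono[OF G order_refl, of "set es"] cycle unfolding is_cycle_def
    by (simp add: Un_absorb1)
  ultimately show False
    using eq by linarith
qed

theorem proposition5p1:
  fixes V :: "'a set" and E :: "'e set" and ends :: "'e \<Rightarrow> 'a set"
    and col :: "'e \<Rightarrow> colour" and n :: nat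
  assumes "n \<ge> 1" and "card V = n"
    and "coloured_multigraph V E ends col"
  shows "Sigma_graph V E ends col \<le> int n \<and>
         (Sigma_graph V E ends col = int n \<longleftrightarrow>
            (\<forall>xs es. is_cycle V E ends xs es \<longrightarrow> monochromatic col es))"
proof -
  have "finite V"
    using assms(3) unfolding coloured_multigraph_def by simp
  then have Sigma: "Sigma_graph V E ends col = potential V E ends col"
    by (rule Sigma_graph_eq_potential)
  show ?thesis
    unfolding Sigma assms(2)[symmetric]
    using potential_le_card[OF assms(3) order_refl]
      potential_eq_card_if_cycles_monochromatic[OF assms(3) _ order_refl]
      cycles_monochromatic_if_potential_eq_card[OF assms(3)]
    by blast
qed

end
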